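(* Consider an instance of the Steiner Team Orienteering Problem as described in the context, and the linear programs $\mathcal{L}_1$ and $\mathcal{L}_2$ defined there. Then $\mathcal{L}_1$ and $\mathcal{L}_2$ are equivalent: for every feasible solution $(x,y,z,\varphi)$ of $\mathcal{L}_1$ there is a feasible solution $(x,y,f,\varphi)$ of $\mathcal{L}_2$ with the same $(x,y,\varphi)$ (hence the same objective value $\sum_{i\in P}p_iy_i$), and for every feasible solution $(x,y,f,\varphi)$ of $\mathcal{L}_2$ there is a feasible solution $(x,y,z,\varphi)$ of $\mathcal{L}_1$ with the same $(x,y,\varphi)$. In particular $\mathcal{L}_1$ and $\mathcal{L}_2$ have the same optimal value.
   Context: An instance of the Steiner Team Orienteering Problem (STOP) consists of: a digraph $G=(N,A)$; an origin $s\in N$ and a destination $t\in N$ with $s\neq t$; disjoint sets $S,P\subseteq N\setminus\{s,t\}$ (mandatory and profitable vertices) with $N=S\cup P\cup\{s,t\}$; rewards $p_i\in\mathbb{Z}^+$ for $i\in P$; traverse times $d_{ij}\in\mathbb{R}^+$ for $(i,j)\in A$; a number $m$ of vehicles and a time limit $T$. For $i\in N$ let $\delta^+(i)=\{j\in N:(i,j)\in A\}$ and $\delta^-(i)=\{j\in N:(j,i)\in A\}$. For $i,j\in N$, $R_{ij}$ denotes the minimum of $\sum_{a\in A_p}d_a$ over all paths $p$ from $i$ to $j$ in $G$ (with arc set $A_p$), and $R_{ii}=0$. Common constraints (C) on variables $x\in\mathbb{R}^A$, $y\in\mathbb{R}^N$, $\varphi\in\mathbb{R}$: (C1) $y_i=1$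 for all $i\in S\cup\{s,t\}$; (C2) $\sum_{j\in\delta^+(i)}x_{ij}=y_i$ for all $i\in S\cup P$; (C3) $\sum_{j\in\delta^+(s)}x_{sj}=\sum_{i\in\delta^-(t)}x_{it}=m-\varphi$; (C4) $\sum_{i\in\delta^-(s)}x_{is}=\sum_{j\in\delta^+(t)}x_{tj}=0$; (C5) $\sum_{j\in\delta^+(i)}x_{ij}-\sum_{j\in\delta^-(i)}x_{ji}=0$ for all $i\in S\cup P$; and $0\le\varphi\le m$. Formulation $\mathcal{F}_1$: maximize $\sum_{i\in P}p_iy_i$ over $(x,y,z,\varphi)$, $z\in\mathbb{R}^A$, subject to (C); $z_{sj}=d_{sj}x_{sj}$ for all $j\in\delta^+(s)$; $\sum_{j\in\delta^+(i)}z_{ij}-\sum_{j\in\delta^-(i)}z_{ji}=\sum_{j\in\delta^+(i)}d_{ij}x_{ij}$ for all $i\in S\cup P$; $z_{ij}\le(T-R_{jt})x_{ij}$ and $z_{ij}\ge(R_{si}+d_{ij})x_{ij}$ for all $(i,j)\in A$; $x\in\{0,1\}^A$, $y\in\{0,1\}^N$, $z\ge0$. Formulation $\mathcal{F}_2$: maximize $\sum_{i\in P}p_iy_i$ over $(x,y,f,\varphi)$, $f\in\mathbb{R}^A$, subject to (C); $f_{sj}=(T-d_{sj})x_{sj}$ for all $j\in\delta^+(s)$; $\sum_{j\in\delta^-(i)}f_{ji}-\sum_{j\in\delta^+(i)}f_{ij}=\sum_{j\in\delta^+(i)}d_{ij}x_{ij}$ for all $i\in S\cup P$; $f_{ij}\le(T-R_{si}-d_{ij})x_{ij}$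 for all $(i,j)\in A$ with $i\neq s$; $f_{ij}\ge R_{jt}x_{ij}$ for all $(i,j)\in A$; $x\in\{0,1\}^A$, $y\in\{0,1\}^N$, $f\ge0$. $\mathcal{L}_1$ and $\mathcal{L}_2$ are the linear relaxations of $\mathcal{F}_1$ and $\mathcal{F}_2$, obtained by replacing $x\in\{0,1\}^A$, $y\in\{0,1\}^N$ with $0\le x\le 1$, $0\le y\le 1$. *)

theory Defs
  imports Complex_Main
begin

definition out_nbrs :: "'a set \<Rightarrow> ('a \<times> 'a) set \<Rightarrow> 'a \<Rightarrow> 'a set" where
  "out_nbrs N A i = {j \<in> N. (i, j) \<in> A}"

definition in_nbrs :: "'a set \<Rightarrow> ('a \<times> 'a) set \<Rightarrow> 'a \<Rightarrow> 'a set" where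
  "in_nbrs N A i = {j \<in> N. (j, i) \<in> A}"

definition is_path :: "('a \<times> 'a) set \<Rightarrow> 'a \<Rightarrow> 'a \<Rightarrow> 'a list \<Rightarrow> bool" where
  "is_path A i j vs \<longleftrightarrow> vs \<noteq> [] \<and> hd vs = i \<and> last vs = j \<and> distinct vs \<and>
     (\<forall>k. Suc k < length vs \<longrightarrow> (vs ! k, vs ! Suc k) \<in> A)"

definition path_len :: "('a \<Rightarrow> 'a \<Rightarrow> real) \<Rightarrow> 'a list \<Rightarrow> real" where
  "path_len d vs = (\<Sum>k<length vs - 1. d (vs ! k) (vs ! Suc k))"

definition R :: "('a \<times> 'a) set \<Rightarrow> ('a \<Rightarrow> 'a \<Rightarrow> real) \<Rightarrow> 'a \<Rightarrow> 'a \<Rightarrow> real" where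
  "R A d i j = (if i = j then 0 else Inf {path_len d vs | vs. is_path A i j vs})"

definition stop_instance ::
  "'a set \<Rightarrow> ('a \<times> 'a) set \<Rightarrow> 'a \<Rightarrow> 'a \<Rightarrow> 'a set \<Rightarrow> 'a set \<Rightarrow> ('a \<Rightarrow> int)
   \<Rightarrow> ('a \<Rightarrow> 'a \<Rightarrow> real) \<Rightarrow> nat \<Rightarrow> real \<Rightarrow> bool" where
  "stop_instance N A s t S P p d m T \<longleftrightarrow>
     finite N \<and> A \<subseteq> N \<times> N \<and> s \<in> N \<and> t \<in> N \<and> s \<noteq> t \<and>
     S \<subseteq> N - {s, t} \<and> P \<subseteq> N - {s, t} \<and> S \<inter> P = {} \<and> N = S \<union> P \<union> {s, t} \<and>
     (\<forall>i\<in>P. p i > 0) \<and> (\<forall>(i, j)\<in>A. d i j > 0)"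

definition common_C ::
  "'a set \<Rightarrow> ('a \<times> 'a) set \<Rightarrow> 'a \<Rightarrow> 'a \<Rightarrow> 'a set \<Rightarrow> 'a set \<Rightarrow> nat
   \<Rightarrow> ('a \<Rightarrow> 'a \<Rightarrow> real) \<Rightarrow> ('a \<Rightarrow> real) \<Rightarrow> real \<Rightarrow> bool" where
  "common_C N A s t S P m x y \<phi> \<longleftrightarrow>
     (\<forall>i \<in> S \<union> {s, t}. y i = 1) \<and>
     (\<forall>i \<in> S \<union> P. (\<Sum>j\<in>out_nbrs N A i. x i j) = y i) \<and>
     (\<Sum>j\<in>out_nbrs N A s. x s j) = real m - \<phi> \<and>
     (\<Sum>i\<in>in_nbrs N A t. x i t) = real m - \<phi> \<and>
     (\<Sum>i\<in>in_nbrs N A s. x i s) = 0 \<and>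
     (\<Sum>j\<in>out_nbrs N A t. x t j) = 0 \<and>
     (\<forall>i \<in> S \<union> P. (\<Sum>j\<in>out_nbrs N A i. x i j) - (\<Sum>j\<in>in_nbrs N A i. x j i) = 0) \<and>
     0 \<le> \<phi> \<and> \<phi> \<le> real m"

definition L1_feasible ::
  "'a set \<Rightarrow> ('a \<times> 'a) set \<Rightarrow> 'a \<Rightarrow> 'a \<Rightarrow> 'a set \<Rightarrow> 'a set \<Rightarrow> ('a \<Rightarrow> 'a \<Rightarrow> real)
   \<Rightarrow> nat \<Rightarrow> real \<Rightarrow> ('a \<Rightarrow> 'a \<Rightarrow> real) \<Rightarrow> ('a \<Rightarrow> real) \<Rightarrow> ('a \<Rightarrow> 'a \<Rightarrow> real) \<Rightarrow> real \<Rightarrow> bool" where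
  "L1_feasible N A s t S P d m T x y z \<phi> \<longleftrightarrow>
     common_C N A s t S P m x y \<phi> \<and>
     (\<forall>j \<in> out_nbrs N A s. z s j = d s j * x s j) \<and>
     (\<forall>i \<in> S \<union> P. (\<Sum>j\<in>out_nbrs N A i. z i j) - (\<Sum>j\<in>in_nbrs N A i. z j i)
                    = (\<Sum>j\<in>out_nbrs N A i. d i j * x i j)) \<and>
     (\<forall>(i, j) \<in> A. z i j \<le> (T - R A d j t) * x i j) \<and>
     (\<forall>(i, j) \<in> A. z i j \<ge> (R A d s i + d i j) * x i j) \<and>
     (\<forall>(i, j) \<in> A. 0 \<le> x i j \<and> x i j \<le> 1) \<and>
     (\<forall>i \<in> N. 0 \<le> y i \<and> y i \<le> 1) \<and>
     (\<forall>(i, j) \<in> A. z i j \<ge> 0)"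

definition L2_feasible ::
  "'a set \<Rightarrow> ('a \<times> 'a) set \<Rightarrow> 'a \<Rightarrow> 'a \<Rightarrow> 'a set \<Rightarrow> 'a set \<Rightarrow> ('a \<Rightarrow> 'a \<Rightarrow> real)
   \<Rightarrow> nat \<Rightarrow> real \<Rightarrow> ('a \<Rightarrow> 'a \<Rightarrow> real) \<Rightarrow> ('a \<Rightarrow> real) \<Rightarrow> ('a \<Rightarrow> 'a \<Rightarrow> real) \<Rightarrow> real \<Rightarrow> bool" where
  "L2_feasible N A s t S P d m T x y f \<phi> \<longleftrightarrow>
     common_C N A s t S P m x y \<phi> \<and>
     (\<forall>j \<in> out_nbrs N A s. f s j = (T - d s j) * x s j) \<and>
     (\<forall>i \<in> S \<union> P. (\<Sum>j\<in>in_nbrs N A i. f j i) - (\<Sum>j\<in>out_nbrs N A i. f i j)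
                    = (\<Sum>j\<in>out_nbrs N A i. d i j * x i j)) \<and>
     (\<forall>(i, j) \<in> A. i \<noteq> s \<longrightarrow> f i j \<le> (T - R A d s i - d i j) * x i j) \<and>
     (\<forall>(i, j) \<in> A. f i j \<ge> R A d j t * x i j) \<and>
     (\<forall>(i, j) \<in> A. 0 \<le> x i j \<and> x i j \<le> 1) \<and>
     (\<forall>i \<in> N. 0 \<le> y i \<and> y i \<le> 1) \<and>
     (\<forall>(i, j) \<in> A. f i j \<ge> 0)"

definition objective :: "'a set \<Rightarrow> ('a \<Rightarrow> int) \<Rightarrow> ('a \<Rightarrow> real) \<Rightarrow> real" where
  "objective P p y = (\<Sum>i\<in>P. real_of_int (p i) * y i)"

end

theory Submission
  imports Defs
begin

(* The substitution f = T x - z, equivalently z = T x - f, maps the feasible solutions of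
   each relaxation onto those of the other: as x is conserved at the inner vertices, the two
   flow equations and the two pairs of bounds correspond term by term.  Only nonnegativity does
   not transfer syntactically; it needs R_jt >= 0 (resp. R_si >= 0) on every arc with x_ij > 0,
   and R_jt is an infimum over paths, an unspecified real when there is no path from j to t.
   So such arcs must lie on walks from s to t.  If j could not reach t, the inner vertices
   that cannot reach t would form a set U that no z-flow leaves, so the net z-outflow of U is
   nonpositive; but it is the sum of the nonnegative terms sum_l d_kl x_kl over k in U, hence
   x vanishes on the arcs leaving vertices of U and, by conservation at j, on (i, j).
   For L2 the same argument runs on the reversed graph. *)

lemma is_path_singleton: "is_path A a a [a]"
  by (simp add: is_path_def)

lemma is_path_drop:
  assumes "is_path A a b vs" "n < length vs"
  shows "is_path A (vs ! n) b (drop n vs)"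
  using assms by (auto simp: is_path_def hd_drop_conv_nth)

lemma is_path_Cons:
  assumes "is_path A c b vs" "(a, c) \<in> A" "a \<notin> set vs"
  shows "is_path A a b (a # vs)"
  using assms by (auto simp: is_path_def nth_Cons hd_conv_nth split: nat.split)

lemma is_path_if_rtrancl: "(a, b) \<in> A\<^sup>* \<Longrightarrow> \<exists>vs. is_path A a b vs"
proof (induction rule: converse_rtrancl_induct)
  case base
  show ?case using is_path_singleton by (rule exI)
next
  case (step a c)
  then obtain vs where vs: "is_path A c b vs" by blast
  show ?case
  proof (cases "a \<in> set vs")
    case True
    then obtain n where "n < length vs" "vs ! n = a" by (auto simp: in_set_conv_nth)
    then show ?thesis using is_path_drop[OF vs] by metis
  next
    case False
    then show ?thesis using is_path_Cons[OF vs step(1)] by blast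
  qed
qed

lemma path_len_nonneg:
  assumes "is_path A a b vs" and "\<And>i j. (i, j) \<in> A \<Longrightarrow> 0 \<le> d i j"
  shows "0 \<le> path_len d vs"
  using assms unfolding path_len_def is_path_def by (intro sum_nonneg) auto

lemma R_nonneg:
  assumes "(a, b) \<in> A\<^sup>*" and "\<And>i j. (i, j) \<in> A \<Longrightarrow> 0 \<le> d i j"
  shows "0 \<le> R A d a b"
proof -
  obtain vs where "is_path A a b vs" using is_path_if_rtrancl[OF assms(1)] by blast
  then have "0 \<le> Inf {path_len d vs | vs. is_path A a b vs}"
    using path_len_nonneg[OF _ assms(2)] by (intro cInf_greatest) auto
  then show ?thesis by (simp add: R_def)
qed

definition net_outflow :: "'a set \<Rightarrow> ('a \<times> 'a) set \<Rightarrow> ('a \<Rightarrow> 'a \<Rightarrow> real) \<Rightarrow> 'a \<Rightarrow> real" where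
  "net_outflow N A g k = (\<Sum>l\<in>out_nbrs N A k. g k l) - (\<Sum>l\<in>in_nbrs N A k. g l k)"

lemma out_nbrs_converse [simp]: "out_nbrs N (A\<inverse>) k = in_nbrs N A k"
  by (simp add: out_nbrs_def in_nbrs_def)

lemma in_nbrs_converse [simp]: "in_nbrs N (A\<inverse>) k = out_nbrs N A k"
  by (simp add: out_nbrs_def in_nbrs_def)

lemma sum_net_outflow_closed_nonpos:
  assumes "finite N" "U \<subseteq> N" "A \<subseteq> N \<times> N"
    and nonneg: "\<And>k l. (k, l) \<in> A \<Longrightarrow> 0 \<le> g k l"
    and closed: "\<And>k l. k \<in> U \<Longrightarrow> (k, l) \<in> A \<Longrightarrow> l \<notin> U \<Longrightarrow> g k l = 0"
  shows "(\<Sum>k\<in>U. net_outflow N A g k) \<le> 0"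
proof -
  have "finite U" using assms(1,2) finite_subset by blast
  let ?arc = "\<lambda>k l. if (k, l) \<in> A then g k l else 0"
  have out: "(\<Sum>l\<in>out_nbrs N A k. g k l) = (\<Sum>l\<in>U. ?arc k l)" if "k \<in> U" for k
  proof -
    have "(\<Sum>l\<in>out_nbrs N A k. g k l) = (\<Sum>l\<in>{l\<in>U. (k, l) \<in> A}. g k l)"
      using assms(1,2) closed[OF that] by (intro sum.mono_neutral_right) (auto simp: out_nbrs_def)
    also have "\<dots> = (\<Sum>l\<in>U. ?arc k l)"
      using \<open>finite U\<close> by (rule sum.inter_filter)
    finally show ?thesis .
  qed
  have inn: "(\<Sum>l\<in>U. ?arc l k) \<le> (\<Sum>l\<in>in_nbrs N A k. g l k)" for k
  proof -
    have "(\<Sum>l\<in>U. ?arc l k) = (\<Sum>l\<in>{l\<in>U. (l, k) \<in> A}. g l k)"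
      using \<open>finite U\<close> by (rule sum.inter_filter[symmetric])
    also have "\<dots> \<le> (\<Sum>l\<in>in_nbrs N A k. g l k)"
      using assms(1,2) nonneg by (intro sum_mono2) (auto simp: in_nbrs_def)
    finally show ?thesis .
  qed
  have "(\<Sum>k\<in>U. net_outflow N A g k) \<le> (\<Sum>k\<in>U. (\<Sum>l\<in>U. ?arc k l) - (\<Sum>l\<in>U. ?arc l k))"
    unfolding net_outflow_def using out inn by (intro sum_mono) fastforce
  also have "\<dots> = (\<Sum>k\<in>U. \<Sum>l\<in>U. ?arc k l) - (\<Sum>k\<in>U. \<Sum>l\<in>U. ?arc l k)"
    by (rule sum_subtractf)
  also have "\<dots> = 0"
    using sum.swap[of ?arc U U] by simp
  finally show ?thesis .
qed

lemma net_outflow_eq_0_if_closed: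
  assumes "finite N" "U \<subseteq> N" "A \<subseteq> N \<times> N"
    and "\<And>k l. (k, l) \<in> A \<Longrightarrow> 0 \<le> g k l"
    and "\<And>k l. k \<in> U \<Longrightarrow> (k, l) \<in> A \<Longrightarrow> l \<notin> U \<Longrightarrow> g k l = 0"
    and excess: "\<And>k. k \<in> U \<Longrightarrow> 0 \<le> net_outflow N A g k"
  shows "\<forall>k\<in>U. net_outflow N A g k = 0"
proof -
  have "finite U" using assms(1,2) finite_subset by blast
  have "(\<Sum>k\<in>U. net_outflow N A g k) \<le> 0"
    using assms by (intro sum_net_outflow_closed_nonpos) auto
  moreover have "0 \<le> (\<Sum>k\<in>U. net_outflow N A g k)"
    using excess by (rule sum_nonneg)
  ultimately have "(\<Sum>k\<in>U. net_outflow N A g k) = 0" by linarith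
  then show ?thesis using sum_nonneg_eq_0_iff[OF \<open>finite U\<close> excess] by simp
qed

lemma nonneg_if_ge_scaled:
  fixes c v w :: real
  assumes "c * w \<le> v" "0 \<le> w" "0 < w \<Longrightarrow> 0 \<le> c"
  shows "0 \<le> v"
  using assms by (cases "w = 0") (auto intro: order_trans[OF mult_nonneg_nonneg])

locale stop_graph =
  fixes N :: "'a set" and A :: "('a \<times> 'a) set" and s t :: 'a and S P :: "'a set"
    and d :: "'a \<Rightarrow> 'a \<Rightarrow> real"
  assumes finite_nodes: "finite N"
    and arcs_subset: "A \<subseteq> N \<times> N"
    and nodes_eq: "N = S \<union> P \<union> {s, t}"
    and d_pos: "(i, j) \<in> A \<Longrightarrow> 0 < d i j"
begin

lemma finite_out_nbrs: "finite (out_nbrs N A i)"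
  using finite_nodes by (simp add: out_nbrs_def)

lemma finite_in_nbrs: "finite (in_nbrs N A i)"
  using finite_nodes by (simp add: in_nbrs_def)

lemma arc_in_nbrs:
  assumes "(i, j) \<in> A"
  shows "j \<in> out_nbrs N A i" "i \<in> in_nbrs N A j"
  using assms arcs_subset by (auto simp: out_nbrs_def in_nbrs_def)

lemma out_arc_eq_0_if_sum_eq_0:
  fixes c :: "'a \<Rightarrow> real"
  assumes "(\<Sum>l\<in>out_nbrs N A k. c l) = 0" "\<And>l. (k, l) \<in> A \<Longrightarrow> 0 \<le> c l" "(k, j) \<in> A"
  shows "c j = 0"
proof -
  have "(\<Sum>l\<in>out_nbrs N A k. c l) = 0 \<longleftrightarrow> (\<forall>l\<in>out_nbrs N A k. c l = 0)"
    by (rule sum_nonneg_eq_0_iff[OF finite_out_nbrs]) (simp add: assms(2) out_nbrs_def)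
  then show ?thesis using assms(1) arc_in_nbrs(1)[OF assms(3)] by blast
qed

lemma in_arc_eq_0_if_sum_eq_0:
  fixes c :: "'a \<Rightarrow> real"
  assumes "(\<Sum>l\<in>in_nbrs N A k. c l) = 0" "\<And>l. (l, k) \<in> A \<Longrightarrow> 0 \<le> c l" "(j, k) \<in> A"
  shows "c j = 0"
proof -
  have "(\<Sum>l\<in>in_nbrs N A k. c l) = 0 \<longleftrightarrow> (\<forall>l\<in>in_nbrs N A k. c l = 0)"
    by (rule sum_nonneg_eq_0_iff[OF finite_in_nbrs]) (simp add: assms(2) in_nbrs_def)
  then show ?thesis using assms(1) arc_in_nbrs(2)[OF assms(3)] by blast
qed

lemma d_nonneg: "(i, j) \<in> A \<Longrightarrow> 0 \<le> d i j"
  using d_pos by (simp add: less_imp_le)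

lemma common_C_inflow_source:
  assumes "common_C N A s t S P m x y \<phi>" "\<And>i j. (i, j) \<in> A \<Longrightarrow> 0 \<le> x i j" "(l, s) \<in> A"
  shows "x l s = 0"
proof -
  have "(\<Sum>i\<in>in_nbrs N A s. x i s) = 0" using assms(1) by (simp add: common_C_def)
  then show ?thesis using assms(2,3) by (rule in_arc_eq_0_if_sum_eq_0)
qed

lemma common_C_outflow_sink:
  assumes "common_C N A s t S P m x y \<phi>" "\<And>i j. (i, j) \<in> A \<Longrightarrow> 0 \<le> x i j" "(t, l) \<in> A"
  shows "x t l = 0"
proof -
  have "(\<Sum>j\<in>out_nbrs N A t. x t j) = 0" using assms(1) by (simp add: common_C_def)
  then show ?thesis using assms(2,3) by (rule out_arc_eq_0_if_sum_eq_0)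
qed

lemma out_arc_eq_0_if_weighted_outflow_eq_0:
  assumes "(\<Sum>l\<in>out_nbrs N A k. d k l * x k l) = 0" "\<And>i j. (i, j) \<in> A \<Longrightarrow> 0 \<le> x i j"
    and "(k, j) \<in> A"
  shows "x k j = 0"
proof -
  have "d k j * x k j = 0"
    by (rule out_arc_eq_0_if_sum_eq_0[OF assms(1) _ assms(3)]) (simp add: assms(2) d_nonneg)
  then show ?thesis using d_pos[OF assms(3)] by simp
qed

lemma weighted_outflow_nonneg:
  assumes "\<And>i j. (i, j) \<in> A \<Longrightarrow> 0 \<le> x i j"
  shows "0 \<le> (\<Sum>l\<in>out_nbrs N A k. d k l * x k l)"
  using assms d_nonneg by (intro sum_nonneg mult_nonneg_nonneg) (auto simp: out_nbrs_def)

lemma common_C_in_arc_eq_0_if_weighted_outflow_eq_0: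
  assumes "common_C N A s t S P m x y \<phi>" "\<And>i j. (i, j) \<in> A \<Longrightarrow> 0 \<le> x i j" "k \<in> S \<union> P"
    and "(\<Sum>l\<in>out_nbrs N A k. d k l * x k l) = 0" "(i, k) \<in> A"
  shows "x i k = 0"
proof -
  have "x k l = 0" if "(k, l) \<in> A" for l
    using assms(4,2) that by (rule out_arc_eq_0_if_weighted_outflow_eq_0)
  then have "(\<Sum>l\<in>out_nbrs N A k. x k l) = 0" by (simp add: out_nbrs_def)
  then have "(\<Sum>l\<in>in_nbrs N A k. x l k) = 0" using assms(1,3) by (auto simp: common_C_def)
  then show ?thesis using assms(2,5) by (rule in_arc_eq_0_if_sum_eq_0)
qed

lemma L1_feasible_arc_reaches_sink:
  assumes F: "L1_feasible N A s t S P d m T x y z \<phi>" and ij: "(i, j) \<in> A" "0 < x i j"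
  shows "(j, t) \<in> A\<^sup>*"
proof (rule ccontr)
  assume "(j, t) \<notin> A\<^sup>*"
  have C: "common_C N A s t S P m x y \<phi>"
    and xnn: "\<And>k l. (k, l) \<in> A \<Longrightarrow> 0 \<le> x k l"
    and znn: "\<And>k l. (k, l) \<in> A \<Longrightarrow> 0 \<le> z k l"
    and zup: "\<And>k l. (k, l) \<in> A \<Longrightarrow> z k l \<le> (T - R A d l t) * x k l"
    and zflow: "\<And>k. k \<in> S \<union> P \<Longrightarrow> net_outflow N A z k = (\<Sum>l\<in>out_nbrs N A k. d k l * x k l)"
    using F unfolding L1_feasible_def net_outflow_def by blast+
  define U where "U = {k \<in> S \<union> P. (k, t) \<notin> A\<^sup>*}"
  have U_subset: "U \<subseteq> S \<union> P" "U \<subseteq> N" using nodes_eq by (auto simp: U_def)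
  have into_U: "l \<in> U" if "(k, l) \<in> A" "0 < x k l" "(l, t) \<notin> A\<^sup>*" for k l
  proof -
    have "l \<noteq> s" using common_C_inflow_source[OF C xnn] that(1,2) by force
    moreover have "l \<in> N" "l \<noteq> t" using that(1,3) arcs_subset by auto
    ultimately show ?thesis using that(3) nodes_eq by (auto simp: U_def)
  qed
  have U_closed: "z k l = 0" if "k \<in> U" "(k, l) \<in> A" "l \<notin> U" for k l
  proof -
    have "(k, t) \<notin> A\<^sup>*" using that(1) by (simp add: U_def)
    then have "(l, t) \<notin> A\<^sup>*" using that(2) by (meson converse_rtrancl_into_rtrancl)
    then have "\<not> 0 < x k l" using into_U[OF that(2)] that(3) by blast
    then have "x k l = 0" using xnn[OF that(2)] by simp
    then show ?thesis using zup[OF that(2)] znn[OF that(2)] by simp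
  qed
  have excess: "0 \<le> net_outflow N A z k" if "k \<in> U" for k
    using zflow[of k] that U_subset weighted_outflow_nonneg[where x = x and k = k, OF xnn] by auto
  have "j \<in> U" using into_U ij \<open>(j, t) \<notin> A\<^sup>*\<close> by blast
  moreover have "\<forall>k\<in>U. net_outflow N A z k = 0"
    using finite_nodes U_subset(2) arcs_subset znn U_closed excess
    by (rule net_outflow_eq_0_if_closed[where g = z])
  ultimately have inner: "j \<in> S \<union> P"
    and no_outflow: "(\<Sum>l\<in>out_nbrs N A j. d j l * x j l) = 0"
    using zflow[of j] U_subset(1) by auto
  have "x i j = 0"
    by (rule common_C_in_arc_eq_0_if_weighted_outflow_eq_0[OF C xnn inner no_outflow ij(1)])
  then show False using ij(2) by simp
qed

lemma L2_feasible_source_reaches_arc: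
  assumes F: "L2_feasible N A s t S P d m T x y f \<phi>" and ij: "(i, j) \<in> A" "0 < x i j"
  shows "(s, i) \<in> A\<^sup>*"
proof (rule ccontr)
  assume "(s, i) \<notin> A\<^sup>*"
  have C: "common_C N A s t S P m x y \<phi>"
    and xnn: "\<And>k l. (k, l) \<in> A \<Longrightarrow> 0 \<le> x k l"
    and fnn: "\<And>k l. (k, l) \<in> A \<Longrightarrow> 0 \<le> f k l"
    and fup: "\<And>k l. (k, l) \<in> A \<Longrightarrow> k \<noteq> s \<Longrightarrow> f k l \<le> (T - R A d s k - d k l) * x k l"
    and fflow: "\<And>k. k \<in> S \<union> P \<Longrightarrow>
      (\<Sum>l\<in>in_nbrs N A k. f l k) - (\<Sum>l\<in>out_nbrs N A k. f k l) = (\<Sum>l\<in>out_nbrs N A k. d k l * x k l)"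
    using F unfolding L2_feasible_def by blast+
  define U where "U = {k \<in> S \<union> P. (s, k) \<notin> A\<^sup>*}"
  have U_subset: "U \<subseteq> S \<union> P" "U \<subseteq> N" using nodes_eq by (auto simp: U_def)
  have into_U: "k \<in> U" if "(k, l) \<in> A" "0 < x k l" "(s, k) \<notin> A\<^sup>*" for k l
  proof -
    have "k \<noteq> t" using common_C_outflow_sink[OF C xnn] that(1,2) by force
    moreover have "k \<in> N" "k \<noteq> s" using that(1,3) arcs_subset by auto
    ultimately show ?thesis using that(3) nodes_eq by (auto simp: U_def)
  qed
  have U_closed: "f l k = 0" if "k \<in> U" "(k, l) \<in> A\<inverse>" "l \<notin> U" for k l
  proof -
    have lk: "(l, k) \<in> A" using that(2) by simp
    have "(s, k) \<notin> A\<^sup>*" using that(1) by (simp add: U_def)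
    then have "(s, l) \<notin> A\<^sup>*" using lk by (meson rtrancl_into_rtrancl)
    then have ls: "l \<noteq> s" and "\<not> 0 < x l k" using into_U[OF lk] that(3) by auto
    then have "x l k = 0" using xnn[OF lk] by simp
    then show ?thesis using fup[OF lk ls] fnn[OF lk] by simp
  qed
  have excess: "0 \<le> net_outflow N (A\<inverse>) (\<lambda>k l. f l k) k" if "k \<in> U" for k
    using fflow[of k] that U_subset weighted_outflow_nonneg[where x = x and k = k, OF xnn]
    by (auto simp: net_outflow_def)
  have "i \<in> U" using into_U ij \<open>(s, i) \<notin> A\<^sup>*\<close> by blast
  moreover have "\<forall>k\<in>U. net_outflow N (A\<inverse>) (\<lambda>k l. f l k) k = 0"
    using arcs_subset fnn U_closed excess
    by (intro net_outflow_eq_0_if_closed[where g = "\<lambda>k l. f l k", OF finite_nodes U_subset(2)])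
      auto
  ultimately have "(\<Sum>l\<in>out_nbrs N A i. d i l * x i l) = 0"
    using fflow[of i] U_subset(1) by (auto simp: net_outflow_def)
  then have "x i j = 0" using xnn ij(1) by (rule out_arc_eq_0_if_weighted_outflow_eq_0)
  then show False using ij(2) by simp
qed

lemma L2_feasible_if_L1_feasible:
  assumes F: "L1_feasible N A s t S P d m T x y z \<phi>"
  shows "L2_feasible N A s t S P d m T x y (\<lambda>i j. T * x i j - z i j) \<phi>"
proof -
  have C: "common_C N A s t S P m x y \<phi>"
    and xnn: "\<And>k l. (k, l) \<in> A \<Longrightarrow> 0 \<le> x k l"
    and zup: "\<And>k l. (k, l) \<in> A \<Longrightarrow> z k l \<le> (T - R A d l t) * x k l"
    and zflow: "\<And>k. k \<in> S \<union> P \<Longrightarrow> net_outflow N A z k = (\<Sum>l\<in>out_nbrs N A k. d k l * x k l)"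
    using F unfolding L1_feasible_def net_outflow_def by blast+
  have xcons: "\<And>k. k \<in> S \<union> P \<Longrightarrow> net_outflow N A x k = 0"
    using C unfolding common_C_def net_outflow_def by blast
  have "(\<Sum>l\<in>in_nbrs N A k. T * x l k - z l k) - (\<Sum>l\<in>out_nbrs N A k. T * x k l - z k l)
      = (\<Sum>l\<in>out_nbrs N A k. d k l * x k l)" if "k \<in> S \<union> P" for k
  proof -
    have "(\<Sum>l\<in>in_nbrs N A k. T * x l k - z l k) - (\<Sum>l\<in>out_nbrs N A k. T * x k l - z k l)
        = net_outflow N A z k - T * net_outflow N A x k"
      by (simp add: net_outflow_def sum_subtractf sum_distrib_left right_diff_distrib)
    then show ?thesis using xcons[OF that] zflow[OF that] by simp
  qed
  moreover have "0 \<le> T * x i j - z i j" if "(i, j) \<in> A" for i j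
  proof (rule nonneg_if_ge_scaled)
    show "R A d j t * x i j \<le> T * x i j - z i j" using zup[OF that] by (simp add: algebra_simps)
    show "0 \<le> x i j" using xnn[OF that] .
    show "0 \<le> R A d j t" if "0 < x i j"
      using L1_feasible_arc_reaches_sink[OF F \<open>(i, j) \<in> A\<close> that] d_nonneg by (rule R_nonneg)
  qed
  ultimately show ?thesis
    using F unfolding L1_feasible_def L2_feasible_def by (auto simp: algebra_simps)
qed

lemma L1_feasible_if_L2_feasible:
  assumes F: "L2_feasible N A s t S P d m T x y f \<phi>"
  shows "L1_feasible N A s t S P d m T x y (\<lambda>i j. T * x i j - f i j) \<phi>"
proof -
  have C: "common_C N A s t S P m x y \<phi>"
    and xnn: "\<And>k l. (k, l) \<in> A \<Longrightarrow> 0 \<le> x k l"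
    and fs: "\<And>l. l \<in> out_nbrs N A s \<Longrightarrow> f s l = (T - d s l) * x s l"
    and fup: "\<And>k l. (k, l) \<in> A \<Longrightarrow> k \<noteq> s \<Longrightarrow> f k l \<le> (T - R A d s k - d k l) * x k l"
    and fflow: "\<And>k. k \<in> S \<union> P \<Longrightarrow>
      (\<Sum>l\<in>in_nbrs N A k. f l k) - (\<Sum>l\<in>out_nbrs N A k. f k l) = (\<Sum>l\<in>out_nbrs N A k. d k l * x k l)"
    using F unfolding L2_feasible_def by blast+
  have xcons: "\<And>k. k \<in> S \<union> P \<Longrightarrow> net_outflow N A x k = 0"
    using C unfolding common_C_def net_outflow_def by blast
  have "(\<Sum>l\<in>out_nbrs N A k. T * x k l - f k l) - (\<Sum>l\<in>in_nbrs N A k. T * x l k - f l k)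
      = (\<Sum>l\<in>out_nbrs N A k. d k l * x k l)" if "k \<in> S \<union> P" for k
  proof -
    have "(\<Sum>l\<in>out_nbrs N A k. T * x k l - f k l) - (\<Sum>l\<in>in_nbrs N A k. T * x l k - f l k)
        = T * net_outflow N A x k - net_outflow N A f k"
      by (simp add: net_outflow_def sum_subtractf sum_distrib_left right_diff_distrib)
    then show ?thesis using xcons[OF that] fflow[OF that] by (simp add: net_outflow_def)
  qed
  moreover have "(R A d s i + d i j) * x i j \<le> T * x i j - f i j \<and> 0 \<le> T * x i j - f i j"
    if "(i, j) \<in> A" for i j
  proof (cases "i = s")
    case True
    then have "T * x i j - f i j = d i j * x i j"
      using fs arc_in_nbrs(1)[OF that] by (simp add: algebra_simps)
    then show ?thesis using True d_nonneg[OF that] xnn[OF that] by (simp add: R_def)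
  next
    case False
    have "(R A d s i + d i j) * x i j \<le> T * x i j - f i j"
      using fup[OF that False] by (simp add: algebra_simps)
    moreover have "0 \<le> R A d s i + d i j" if "0 < x i j"
    proof -
      have "0 \<le> R A d s i"
        using L2_feasible_source_reaches_arc[OF F \<open>(i, j) \<in> A\<close> that] d_nonneg by (rule R_nonneg)
      then show ?thesis using d_nonneg[OF \<open>(i, j) \<in> A\<close>] by linarith
    qed
    ultimately show ?thesis using nonneg_if_ge_scaled xnn[OF that] by blast
  qed
  ultimately show ?thesis
    using F unfolding L1_feasible_def L2_feasible_def by (auto simp: algebra_simps)
qed

end

lemma stop_graph_if_stop_instance:
  "stop_instance N A s t S P p d m T \<Longrightarrow> stop_graph N A s t S P d"
  unfolding stop_instance_def stop_graph_def by blast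

theorem theorem1:
  fixes N :: "'a set" and A :: "('a \<times> 'a) set" and s t :: 'a and S P :: "'a set"
    and p :: "'a \<Rightarrow> int" and d :: "'a \<Rightarrow> 'a \<Rightarrow> real" and m :: nat and T :: real
  assumes "stop_instance N A s t S P p d m T"
  shows "(\<forall>x y z \<phi>. L1_feasible N A s t S P d m T x y z \<phi> \<longrightarrow>
            (\<exists>f. L2_feasible N A s t S P d m T x y f \<phi>))
       \<and> (\<forall>x y f \<phi>. L2_feasible N A s t S P d m T x y f \<phi> \<longrightarrow>
            (\<exists>z. L1_feasible N A s t S P d m T x y z \<phi>))
       \<and> (SUP (x, y, z, \<phi>) \<in> {(x, y, z, \<phi>). L1_feasible N A s t S P d m T x y z \<phi>}. objective P p y)
         = (SUP (x, y, f, \<phi>) \<in> {(x, y, f, \<phi>). L2_feasible N A s t S P d m T x y f \<phi>}. objective P p y)"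
proof -
  interpret stop_graph N A s t S P d
    using assms by (rule stop_graph_if_stop_instance)
  have L1_L2: "\<forall>x y z \<phi>. L1_feasible N A s t S P d m T x y z \<phi> \<longrightarrow>
      (\<exists>f. L2_feasible N A s t S P d m T x y f \<phi>)"
    using L2_feasible_if_L1_feasible by blast
  have L2_L1: "\<forall>x y f \<phi>. L2_feasible N A s t S P d m T x y f \<phi> \<longrightarrow>
      (\<exists>z. L1_feasible N A s t S P d m T x y z \<phi>)"
    using L1_feasible_if_L2_feasible by blast
  have "(\<lambda>(x, y, z, \<phi>). objective P p y) ` {(x, y, z, \<phi>). L1_feasible N A s t S P d m T x y z \<phi>}
      = (\<lambda>(x, y, f, \<phi>). objective P p y) ` {(x, y, f, \<phi>). L2_feasible N A s t S P d m T x y f \<phi>}"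
    using L1_L2 L2_L1 by (auto simp: image_iff; metis)
  then show ?thesis using L1_L2 L2_L1 by simp
qed

end
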